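(* Let $q\ge 4$ be even. Suppose there exists a Steiner quadruple system on $B_q$ that satisfies the step property with respect to some total order on $B_q$. Then $N(4,q,1)=\dfrac{q^2(q+2)}{4}$.
   Context: $B_q=\{0,\dots,q-1\}$ and $B_q^n$ is the set of words of length $n$ over $B_q$. $N(n,q,1)$ is the maximum cardinality of a code $C\subseteq B_q^n$ capable of correcting single deletions, i.e. such that the sets $\lfloor x\rfloor_1$ ($x\in C$) of words obtained from $x$ by deleting one letter are pairwise disjoint (equivalently, the minimum deletion–insertion distance of $C$ exceeds 2). A Steiner quadruple system $SQS(q)$ on $B_q$ is a set of 4-element subsets (quadruples) of $B_q$ such that every 3-element subset of $B_q$ is contained in exactly one quadruple. Step property: given a total order $L_0<L_1<\cdots<L_{q-1}$ on $B_q=\{L_0,\dots,L_{q-1}\}$, the $SQS(q)$ satisfies the step property with respect to this order if for every $t\in\{0,\dots,q/2-1\}$ and every quadruple of the system of the form $\{L_{2t},L_{2t+1},L_a,L_b\}$, either $a<2t$ and $b<2t$, or $a>2t+1$ and $b>2t+1$. *)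

theory Defs
  imports Complex_Main
begin

definition words :: "nat \<Rightarrow> nat \<Rightarrow> nat list set" where
  "words n q = {x. length x = n \<and> set x \<subseteq> {..<q}}"

definition del1 :: "nat list \<Rightarrow> nat list set" where
  "del1 x = {take i x @ drop (Suc i) x | i. i < length x}"

definition sdc_code :: "nat \<Rightarrow> nat \<Rightarrow> nat list set \<Rightarrow> bool" where
  "sdc_code n q C \<longleftrightarrow> C \<subseteq> words n q \<and>
     (\<forall>x\<in>C. \<forall>y\<in>C. x \<noteq> y \<longrightarrow> del1 x \<inter> del1 y = {})"

definition N1 :: "nat \<Rightarrow> nat \<Rightarrow> nat" where
  "N1 n q = Max {card C | C. sdc_code n q C}"

definition SQS :: "nat \<Rightarrow> nat set set \<Rightarrow> bool" where
  "SQS q S \<longleftrightarrow> (\<forall>Q\<in>S. Q \<subseteq> {..<q} \<and> card Q = 4) \<and>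
     (\<forall>T. T \<subseteq> {..<q} \<and> card T = 3 \<longrightarrow> (\<exists>!Q. Q \<in> S \<and> T \<subseteq> Q))"

text \<open>Step property w.r.t. the total order L 0 < L 1 < ... < L (q-1),
  where L is a bijection from {0..<q} onto B_q.\<close>
definition step_property :: "nat \<Rightarrow> nat set set \<Rightarrow> (nat \<Rightarrow> nat) \<Rightarrow> bool" where
  "step_property q S L \<longleftrightarrow>
     (\<forall>t < q div 2. \<forall>Q\<in>S. \<forall>a<q. \<forall>b<q.
        Q = {L (2*t), L (2*t+1), L a, L b} \<longrightarrow>
        (a < 2*t \<and> b < 2*t) \<or> (a > 2*t+1 \<and> b > 2*t+1))"

end

theory Submission
  imports Defs
begin

(* The value N(4,q,1) = q^2(q+2)/4 is obtained by matching bounds.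

   Words of length 3 get a weight: 1 for aaa,
   1/2 for aab and abb, 1/4 otherwise; the total weight of B_q^3 is
   q^3/4 + q^2/2 + q/4, and every word of length 4 has deletion weight at
   least 1.  A parity argument on the q-1 palindromes [a,b,a] (b <> a) shows
   that for every letter a a single-deletion code either misses one of them or
   contains a codeword whose deletion weight exceeds 1 by a quarter for each
   such letter.  Summing over the letters costs at least q/4.

   Relabelling reduces the step property to the identity order.
   The code consists of the words aaaa, aabb (a <> b) and, for every
   quadruple, 8 or 6 explicit words on its letters; it misses exactly the
   q palindromes [a,a',a] with a' the partner of a in the pairs {2t,2t+1},
   of total weight q/4, and all its words have deletion weight at most 1. *)

lemma del1_image: "del1 x = (\<lambda>i. take i x @ drop (Suc i) x) ` {..<length x}"
  unfolding del1_def by auto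

lemma del1_length4: "del1 [a,b,c,d] = {[b,c,d],[a,c,d],[a,b,d],[a,b,c]}"
  unfolding del1_image by (simp add: numeral_eq_Suc lessThan_Suc insert_commute)

lemma list_length4: "length x = 4 \<Longrightarrow> x = [x!0, x!1, x!2, x!3]"
  by (cases x; cases "tl x"; cases "tl (tl x)"; cases "tl (tl (tl x))"; auto simp: numeral_eq_Suc)

lemma list_length3: "length x = 3 \<Longrightarrow> x = [x!0, x!1, x!2]"
  by (cases x; cases "tl x"; cases "tl (tl x)"; auto simp: numeral_eq_Suc)

lemma del1_length: "y \<in> del1 x \<Longrightarrow> length y = length x - 1"
  unfolding del1_def by auto

lemma del1_set: "y \<in> del1 x \<Longrightarrow> set y \<subseteq> set x"
  unfolding del1_def by (auto dest: in_set_takeD in_set_dropD)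

lemma finite_del1: "finite (del1 x)"
  unfolding del1_image by simp

lemma finite_words: "finite (words n q)"
proof -
  have "words n q \<subseteq> {xs. set xs \<subseteq> {..<q} \<and> length xs = n}" unfolding words_def by auto
  thus ?thesis using finite_lists_length_eq[of "{..<q}" n] finite_subset by blast
qed

lemma del1_words: "x \<in> words n q \<Longrightarrow> y \<in> del1 x \<Longrightarrow> y \<in> words (n - 1) q"
  using del1_length del1_set unfolding words_def by fastforce

lemma words4E:
  assumes "x \<in> words 4 q"
  obtains a b c d where "x = [a,b,c,d]" "a < q" "b < q" "c < q" "d < q"
proof -
  have l: "length x = 4" and s: "set x \<subseteq> {..<q}" using assms by (auto simp: words_def)
  have e: "x = [x!0,x!1,x!2,x!3]" using list_length4[OF l] .
  have "set [x!0,x!1,x!2,x!3] \<subseteq> {..<q}" using s e by simp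
  thus ?thesis using that e by simp
qed

lemma words3_eq: "words 3 q = (\<lambda>(a,b,c). [a,b,c]) ` ({..<q} \<times> {..<q} \<times> {..<q})"
proof
  show "words 3 q \<subseteq> (\<lambda>(a,b,c). [a,b,c]) ` ({..<q} \<times> {..<q} \<times> {..<q})"
  proof
    fix y assume "y \<in> words 3 q"
    hence l: "length y = 3" and s: "set y \<subseteq> {..<q}" by (auto simp: words_def)
    have e: "y = [y!0,y!1,y!2]" using list_length3[OF l] .
    hence "(y!0,y!1,y!2) \<in> {..<q} \<times> {..<q} \<times> {..<q}" using s by (metis insert_subset list.set lessThan_iff mem_Sigma_iff)
    thus "y \<in> (\<lambda>(a,b,c). [a,b,c]) ` ({..<q} \<times> {..<q} \<times> {..<q})"
      using e by (metis (no_types, lifting) image_eqI old.prod.case)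
  qed
qed (auto simp: words_def)

lemma sum_words3: "(\<Sum>y\<in>words 3 q. f y) = (\<Sum>a<q. \<Sum>b<q. \<Sum>c<q. f [a,b,c])"
proof -
  have inj: "inj_on (\<lambda>(a,b,c). [a::nat,b,c]) ({..<q} \<times> {..<q} \<times> {..<q})"
    by (auto simp: inj_on_def)
  have "(\<Sum>y\<in>words 3 q. f y) = (\<Sum>p\<in>{..<q} \<times> {..<q} \<times> {..<q}. f ((\<lambda>(a,b,c). [a,b,c]) p))"
    unfolding words3_eq by (rule sum.reindex[OF inj, unfolded comp_def])
  also have "\<dots> = (\<Sum>a<q. \<Sum>b<q. \<Sum>c<q. f [a,b,c])"
    by (simp add: sum.cartesian_product case_prod_beta)
  finally show ?thesis .
qed

lemma sdc_code_finite: "sdc_code n q C \<Longrightarrow> finite C"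
  unfolding sdc_code_def using finite_words finite_subset by blast

lemma N1_eqI:
  assumes "sdc_code n q C" and "\<And>C'. sdc_code n q C' \<Longrightarrow> card C' \<le> card C"
  shows "N1 n q = card C"
proof -
  have "{card C | C. sdc_code n q C} \<subseteq> card ` Pow (words n q)"
    unfolding sdc_code_def by blast
  hence "finite {card C | C. sdc_code n q C}" using finite_words finite_subset by blast
  thus ?thesis unfolding N1_def using assms by (intro Max_eqI) auto
qed


section \<open>Weights of words of length 3\<close>

text \<open>The weight of a word of length 3 is 1 for aaa, 1/2 for aab and abb (a \<noteq> b) and
  1/4 otherwise; it is chosen so that every word of length 4 has deletion weight at least 1.\<close>
definition wt :: "nat list \<Rightarrow> real" where
  "wt y = (if y!0 = y!1 \<and> y!1 = y!2 then 1 else if y!0 = y!1 \<or> y!1 = y!2 then 1/2 else 1/4)"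

definition del_weight :: "nat list \<Rightarrow> real" where
  "del_weight x = (\<Sum>y\<in>del1 x. wt y)"

lemma wt_nonneg: "0 \<le> wt y"
  by (simp add: wt_def)

lemma del_weight4: "del_weight [a,b,c,d] = (\<Sum>y\<in>{[b,c,d],[a,c,d],[a,b,d],[a,b,c]}. wt y)"
  by (simp add: del_weight_def del1_length4)

lemma del_weight_ge1: "1 \<le> del_weight [a,b,c,d]"
  unfolding del_weight4
  by (cases "a=b"; cases "a=c"; cases "a=d"; cases "b=c"; cases "b=d"; cases "c=d";
      simp add: wt_def)

lemma total_weight: "(\<Sum>y\<in>words 3 q. wt y) = real q^3/4 + real q^2/2 + real q/4"
proof -
  have "(\<Sum>c<q. wt [a,b,c]) = real q/4 + 1/4 + (if a = b then real q/4 + 1/4 else 0)"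
    if "b < q" for a b
  proof (cases "a = b")
    case True
    hence "wt [a,b,c] = 1/2 + (if b = c then 1/2 else 0)" for c by (simp add: wt_def)
    thus ?thesis using that True by (simp add: sum.distrib)
  next
    case False
    hence "wt [a,b,c] = 1/4 + (if b = c then 1/4 else 0)" for c by (simp add: wt_def)
    thus ?thesis using that False by (simp add: sum.distrib)
  qed
  hence "(\<Sum>b<q. \<Sum>c<q. wt [a,b,c]) = real q^2/4 + real q/2 + 1/4" if "a < q" for a
    using that by (simp add: sum.distrib power2_eq_square algebra_simps)
  hence "(\<Sum>a<q. \<Sum>b<q. \<Sum>c<q. wt [a,b,c]) = real q * (real q^2/4 + real q/2 + 1/4)"
    by simp
  thus ?thesis unfolding sum_words3 by (simp add: algebra_simps power2_eq_square power3_eq_cube)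
qed

lemma code_weight:
  assumes "sdc_code n q C"
  shows "(\<Sum>x\<in>C. del_weight x) = (\<Sum>y\<in>\<Union>(del1 ` C). wt y)"
  unfolding del_weight_def
  by (rule sum.UNION_disjoint[symmetric])
     (use assms sdc_code_finite finite_del1 in \<open>auto simp: sdc_code_def\<close>)

section \<open>The upper bound\<close>

definition pals :: "nat \<Rightarrow> nat \<Rightarrow> nat list set" where
  "pals q a = (\<lambda>b. [a,b,a]) ` ({..<q} - {a})"

lemma pals_iff: "y \<in> pals q a \<longleftrightarrow> (\<exists>b. y = [a,b,a] \<and> b < q \<and> b \<noteq> a)"
  unfolding pals_def by auto

lemma card_pals: "a < q \<Longrightarrow> card (pals q a) = q - 1"
  unfolding pals_def by (subst card_image) (auto simp: inj_on_def)

lemma finite_pals: "finite (pals q a)"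
  unfolding pals_def by simp

definition pal_ends :: "nat list \<Rightarrow> nat set" where
  "pal_ends x = {a. \<exists>b. b \<noteq> a \<and> [a,b,a] \<in> del1 x}"

text \<open>Words abca (a, b, c distinct): they cover exactly the two palindromes [a,b,a] and
  [a,c,a] and have deletion weight 1; all other words pay for their palindromes by
  excess deletion weight.\<close>
definition is_abca :: "nat list \<Rightarrow> bool" where
  "is_abca x \<longleftrightarrow> x!0 = x!3 \<and> x!0 \<noteq> x!1 \<and> x!0 \<noteq> x!2 \<and> x!1 \<noteq> x!2"

lemma pal_ends4: "pal_ends [a,b,c,d] =
  {z. (z = b \<and> b = d \<and> c \<noteq> b) \<or> (z = a \<and> ((a = d \<and> c \<noteq> a) \<or> (a = d \<and> b \<noteq> a) \<or> (a = c \<and> b \<noteq> a)))}"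
  unfolding pal_ends_def del1_length4 by auto

lemma pal_ends_subset: "pal_ends x \<subseteq> set x"
  unfolding pal_ends_def using del1_set by fastforce

lemma abca_covers_two:
  assumes "x \<in> words 4 q" "is_abca x" "a \<in> pal_ends x"
  shows "card (del1 x \<inter> pals q a) = 2"
proof -
  obtain x0 x1 x2 x3 where x: "x = [x0,x1,x2,x3]" "x0 < q" "x1 < q" "x2 < q" "x3 < q"
    using assms(1) by (rule words4E)
  have d: "x0 = x3" "x0 \<noteq> x1" "x0 \<noteq> x2" "x1 \<noteq> x2" using assms(2) x by (auto simp: is_abca_def)
  have a: "a = x0" using assms(3) d unfolding x pal_ends4 by auto
  have "del1 x \<inter> pals q a = {[a,x1,a],[a,x2,a]}"
    unfolding x del1_length4 using d a x by (auto simp: pals_iff)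
  thus ?thesis using d a by simp
qed

text \<open>Parity: the q - 1 palindromes [a,b,a] cannot all be covered by words abca alone,
  which cover them in pairs, when q is even.\<close>
lemma palindrome_parity:
  assumes sdc: "sdc_code 4 q C" and ev: "even q" and aq: "a < q"
  shows "pals q a - \<Union>(del1 ` C) \<noteq> {} \<or> (\<exists>x\<in>C. \<not> is_abca x \<and> a \<in> pal_ends x)"
proof (rule ccontr)
  assume "\<not> ?thesis"
  hence cov: "pals q a \<subseteq> \<Union>(del1 ` C)" and abca: "\<forall>x\<in>C. a \<in> pal_ends x \<longrightarrow> is_abca x"
    by auto
  define Ca where "Ca = {x\<in>C. a \<in> pal_ends x}"
  have two: "card (del1 x \<inter> pals q a) = 2" if "x \<in> Ca" for x
    using that abca sdc abca_covers_two unfolding Ca_def sdc_code_def by blast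
  have "pals q a \<subseteq> (\<Union>x\<in>Ca. del1 x \<inter> pals q a)"
  proof
    fix y assume y: "y \<in> pals q a"
    then obtain x where x: "x \<in> C" "y \<in> del1 x" using cov by blast
    have "a \<in> pal_ends x" using x y by (auto simp: pal_ends_def pals_iff)
    thus "y \<in> (\<Union>x\<in>Ca. del1 x \<inter> pals q a)" using x y Ca_def by auto
  qed
  hence "pals q a = (\<Union>x\<in>Ca. del1 x \<inter> pals q a)" by blast
  moreover have "card (\<Union>x\<in>Ca. del1 x \<inter> pals q a) = (\<Sum>x\<in>Ca. card (del1 x \<inter> pals q a))"
  proof (rule card_UN_disjoint)
    show "finite Ca" using sdc_code_finite[OF sdc] Ca_def by simp
    show "\<forall>x\<in>Ca. finite (del1 x \<inter> pals q a)" using finite_del1 by blast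
    show "\<forall>x\<in>Ca. \<forall>x'\<in>Ca. x \<noteq> x' \<longrightarrow> (del1 x \<inter> pals q a) \<inter> (del1 x' \<inter> pals q a) = {}"
      using sdc unfolding sdc_code_def Ca_def by blast
  qed
  ultimately have "card (pals q a) = (\<Sum>x\<in>Ca. card (del1 x \<inter> pals q a))" by simp
  also have "\<dots> = 2 * card Ca" using two by simp
  finally have "q - 1 = 2 * card Ca" using card_pals[OF aq] by simp
  thus False using ev aq by presburger
qed

lemma excess_weight:
  "\<not> is_abca [a,b,c,d] \<Longrightarrow> real (card (pal_ends [a,b,c,d])) / 4 \<le> del_weight [a,b,c,d] - 1"
  unfolding del_weight4 pal_ends4 is_abca_def
  by (cases "a=b"; cases "a=c"; cases "a=d"; cases "b=c"; cases "b=d"; cases "c=d";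
      simp add: wt_def Collect_disj_eq)

definition excess :: "nat list \<Rightarrow> nat \<Rightarrow> real" where
  "excess x a = of_bool (\<not> is_abca x \<and> a \<in> pal_ends x) / 4"

lemma sum_excess_le:
  assumes "x \<in> words 4 q"
  shows "(\<Sum>a<q. excess x a) \<le> del_weight x - 1"
proof -
  obtain x0 x1 x2 x3 where x: "x = [x0,x1,x2,x3]" using assms by (rule words4E)
  show ?thesis
  proof (cases "is_abca x")
    case True
    thus ?thesis using del_weight_ge1 x by (simp add: excess_def)
  next
    case False
    have fin: "finite (pal_ends x)" using pal_ends_subset finite_subset by blast
    have "(\<Sum>a<q. excess x a) = real (card ({..<q} \<inter> pal_ends x)) / 4"
      using False by (simp add: excess_def sum_divide_distrib[symmetric] sum_of_bool_eq Int_def)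
    also have "\<dots> \<le> real (card (pal_ends x)) / 4"
      using fin by (simp add: card_mono)
    also have "\<dots> \<le> del_weight x - 1" using excess_weight False x by simp
    finally show ?thesis .
  qed
qed

lemma letter_deficit:
  assumes sdc: "sdc_code 4 q C" and ev: "even q" and aq: "a < q"
  shows "1/4 \<le> (\<Sum>y\<in>pals q a - \<Union>(del1 ` C). wt y) + (\<Sum>x\<in>C. excess x a)"
proof -
  have nn1: "0 \<le> (\<Sum>y\<in>pals q a - \<Union>(del1 ` C). wt y)" by (simp add: sum_nonneg wt_nonneg)
  have nn2: "0 \<le> (\<Sum>x\<in>C. excess x a)" by (simp add: sum_nonneg excess_def)
  from palindrome_parity[OF sdc ev aq] show ?thesis
  proof
    assume "pals q a - \<Union>(del1 ` C) \<noteq> {}"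
    then obtain y where y: "y \<in> pals q a - \<Union>(del1 ` C)" by blast
    have "wt y = 1/4" using y by (auto simp: pals_iff wt_def)
    moreover have "wt y \<le> (\<Sum>y\<in>pals q a - \<Union>(del1 ` C). wt y)"
      by (rule member_le_sum) (use y finite_pals wt_nonneg in auto)
    ultimately show ?thesis using nn2 by linarith
  next
    assume "\<exists>x\<in>C. \<not> is_abca x \<and> a \<in> pal_ends x"
    then obtain x where x: "x \<in> C" "excess x a = 1/4" by (auto simp: excess_def)
    have "excess x a \<le> (\<Sum>x\<in>C. excess x a)"
      by (rule member_le_sum) (use x sdc_code_finite[OF sdc] in \<open>auto simp: excess_def\<close>)
    thus ?thesis using x nn1 by simp
  qed
qed

text \<open>Upper bound: the card of a code is its total deletion weight minus its total excess,
  and the covered weight plus the excess falls short of the total weight by at least q/4.\<close>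
theorem sdc_upper_bound:
  assumes sdc: "sdc_code 4 q C" and ev: "even q"
  shows "real (card C) \<le> real q^3/4 + real q^2/2"
proof -
  define Cov where "Cov = \<Union>(del1 ` C)"
  have Cw: "C \<subseteq> words 4 q" using sdc by (simp add: sdc_code_def)
  have Cov3: "Cov \<subseteq> words 3 q" unfolding Cov_def using Cw del1_words by fastforce
  have "real (card C) = (\<Sum>x\<in>C. del_weight x) - (\<Sum>x\<in>C. del_weight x - 1)"
    by (simp add: sum_subtractf)
  also have "(\<Sum>x\<in>C. del_weight x) = (\<Sum>y\<in>words 3 q. wt y) - (\<Sum>y\<in>words 3 q - Cov. wt y)"
    using code_weight[OF sdc] Cov3 finite_words by (simp add: Cov_def sum_diff)
  finally have card_eq: "real (card C) = real q^3/4 + real q^2/2 + real q/4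
      - ((\<Sum>y\<in>words 3 q - Cov. wt y) + (\<Sum>x\<in>C. del_weight x - 1))"
    by (simp add: total_weight)
  have "real q / 4 = (\<Sum>a<q. 1/4::real)" by simp
  also have "\<dots> \<le> (\<Sum>a<q. (\<Sum>y\<in>pals q a - Cov. wt y) + (\<Sum>x\<in>C. excess x a))"
    by (rule sum_mono) (use letter_deficit[OF sdc ev] Cov_def in auto)
  also have "\<dots> = (\<Sum>y\<in>(\<Union>a<q. pals q a - Cov). wt y) + (\<Sum>x\<in>C. \<Sum>a<q. excess x a)"
  proof -
    have "(\<Sum>a<q. \<Sum>y\<in>pals q a - Cov. wt y) = (\<Sum>y\<in>(\<Union>a<q. pals q a - Cov). wt y)"
      by (rule sum.UNION_disjoint[symmetric]) (auto simp: finite_pals pals_iff)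
    thus ?thesis by (simp add: sum.distrib sum.swap[of _ C])
  qed
  also have "\<dots> \<le> (\<Sum>y\<in>words 3 q - Cov. wt y) + (\<Sum>x\<in>C. del_weight x - 1)"
  proof (rule add_mono)
    show "(\<Sum>y\<in>(\<Union>a<q. pals q a - Cov). wt y) \<le> (\<Sum>y\<in>words 3 q - Cov. wt y)"
      by (rule sum_mono2) (use finite_words in \<open>auto simp: pals_iff words_def wt_nonneg\<close>)
    show "(\<Sum>x\<in>C. \<Sum>a<q. excess x a) \<le> (\<Sum>x\<in>C. del_weight x - 1)"
      by (rule sum_mono) (use Cw sum_excess_le in blast)
  qed
  finally show ?thesis using card_eq by linarith
qed

lemma SQS_quadruple: "SQS q S \<Longrightarrow> Q \<in> S \<Longrightarrow> Q \<subseteq> {..<q} \<and> card Q = 4 \<and> finite Q"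
  unfolding SQS_def by (metis card.infinite zero_neq_numeral)

lemma SQS_unique:
  assumes "SQS q S" "Q1 \<in> S" "Q2 \<in> S" "T \<subseteq> Q1" "T \<subseteq> Q2" "card T = 3"
  shows "Q1 = Q2"
proof -
  have "T \<subseteq> {..<q}" using SQS_quadruple[OF assms(1,2)] assms(4) by blast
  hence "\<exists>!Q. Q \<in> S \<and> T \<subseteq> Q" using assms(1,6) unfolding SQS_def by blast
  thus ?thesis using assms by blast
qed

lemma SQS_cover:
  assumes "SQS q S" "T \<subseteq> {..<q}" "card T = 3"
  obtains Q where "Q \<in> S" "T \<subseteq> Q"
  using assms unfolding SQS_def by blast

lemma quadruple_sorted:
  assumes "finite Q" "card Q = 4"
  obtains s0 s1 s2 s3 where "sorted_list_of_set Q = [s0,s1,s2,s3]"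
    "s0 < s1" "s1 < s2" "s2 < s3" "Q = {s0,s1,s2,s3}"
proof -
  define s where "s = sorted_list_of_set Q"
  have l: "length s = 4" using assms s_def by simp
  have st: "sorted_wrt (<) s" using s_def strict_sorted_list_of_set by blast
  have se: "set s = Q" using s_def assms by simp
  have e: "s = [s!0,s!1,s!2,s!3]" using list_length4[OF l] .
  have "sorted_wrt (<) [s!0,s!1,s!2,s!3]" using st e by simp
  hence "s!0 < s!1" "s!1 < s!2" "s!2 < s!3" by auto
  moreover have "Q = {s!0,s!1,s!2,s!3}" using se e by (metis list.set(1) list.set(2))
  ultimately show ?thesis using that e s_def by metis
qed

lemma SQS_relabel:
  assumes sqs: "SQS q S" and bij: "bij_betw L {..<q} {..<q}"
  shows "SQS q ((\<lambda>Q. the_inv_into {..<q} L ` Q) ` S)"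
    and "step_property q S L \<Longrightarrow> step_property q ((\<lambda>Q. the_inv_into {..<q} L ` Q) ` S) id"
proof -
  define R where "R = the_inv_into {..<q} L"
  define S' where "S' = (\<lambda>Q. R ` Q) ` S"
  have injL: "inj_on L {..<q}" using bij bij_betw_def by blast
  have bijR: "bij_betw R {..<q} {..<q}" using bij unfolding R_def by (rule bij_betw_the_inv_into)
  have injR: "inj_on R {..<q}" using bijR bij_betw_def by blast
  have Rq: "R x < q" if "x < q" for x using bijR that bij_betw_apply by fastforce
  have Lq: "L x < q" if "x < q" for x using bij that bij_betw_apply by fastforce
  have LR: "L ` (R ` Q) = Q" if "Q \<subseteq> {..<q}" for Q
    using that bij unfolding R_def by (force simp: image_image f_the_inv_into_f_bij_betw)
  have RL: "R ` (L ` T) = T" if "T \<subseteq> {..<q}" for T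
    using that injL unfolding R_def by (force simp: image_image the_inv_into_f_f)
  show "SQS q ((\<lambda>Q. the_inv_into {..<q} L ` Q) ` S)"
    unfolding R_def[symmetric] S'_def[symmetric] SQS_def
  proof (intro conjI allI impI ballI)
    fix Q' assume "Q' \<in> S'"
    then obtain Q where Q: "Q \<in> S" "Q' = R ` Q" using S'_def by blast
    have Qq: "Q \<subseteq> {..<q}" "card Q = 4" using SQS_quadruple[OF sqs Q(1)] by auto
    show "Q' \<subseteq> {..<q}" using Q(2) Qq Rq by auto
    show "card Q' = 4" using Q(2) Qq card_image inj_on_subset[OF injR Qq(1)] by metis
  next
    fix T assume T: "T \<subseteq> {..<q} \<and> card T = 3"
    have LT: "L ` T \<subseteq> {..<q}" using T Lq by auto
    have cLT: "card (L ` T) = 3" using T card_image inj_on_subset[OF injL] by metis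
    obtain Q where Q: "Q \<in> S" "L ` T \<subseteq> Q" using SQS_cover[OF sqs LT cLT] by blast
    show "\<exists>!Q'. Q' \<in> S' \<and> T \<subseteq> Q'"
    proof (rule ex1I[of _ "R ` Q"])
      show "R ` Q \<in> S' \<and> T \<subseteq> R ` Q"
        using Q S'_def RL[of T] T by (metis image_mono image_eqI)
    next
      fix Q2' assume "Q2' \<in> S' \<and> T \<subseteq> Q2'"
      then obtain Q2 where Q2: "Q2 \<in> S" "Q2' = R ` Q2" "T \<subseteq> R ` Q2" using S'_def by blast
      have "L ` T \<subseteq> Q2" using Q2(3) LR SQS_quadruple[OF sqs Q2(1)] by (metis image_mono)
      hence "Q2 = Q" using SQS_unique[OF sqs Q2(1) Q(1) _ Q(2) cLT] by blast
      thus "Q2' = R ` Q" using Q2(2) by simp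
    qed
  qed
  show "step_property q ((\<lambda>Q. the_inv_into {..<q} L ` Q) ` S) id"
    if st: "step_property q S L"
    unfolding R_def[symmetric] S'_def[symmetric] step_property_def
  proof (intro allI impI ballI)
    fix t Q' a b assume t: "t < q div 2" and Q': "Q' \<in> S'" and ab: "a < q" "b < q"
      and e: "Q' = {id (2*t), id (2*t+1), id a, id b}"
    obtain Q where Q: "Q \<in> S" "Q' = R ` Q" using Q' S'_def by blast
    have "Q = L ` Q'" using LR SQS_quadruple[OF sqs Q(1)] Q(2) by simp
    hence "Q = {L (2*t), L (2*t+1), L a, L b}" using e by simp
    thus "(a < 2*t \<and> b < 2*t) \<or> (a > 2*t+1 \<and> b > 2*t+1)"
      using st Q(1) t ab unfolding step_property_def by blast
  qed
qed

section \<open>The code built from a Steiner quadruple system\<close>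

definition partner :: "nat \<Rightarrow> nat" where
  "partner a = (if even a then Suc a else a - 1)"

lemma partner_div: "partner a div 2 = a div 2"
  unfolding partner_def by presburger

lemma partner_neq: "partner a \<noteq> a"
  unfolding partner_def by presburger

lemma partner_less: "even q \<Longrightarrow> a < q \<Longrightarrow> partner a < q"
  unfolding partner_def by presburger

lemma same_pair: "a div 2 = b div 2 \<Longrightarrow> a \<noteq> b \<Longrightarrow> b = partner a"
  unfolding partner_def by presburger

lemma pair_of: "{2 * (a div 2), Suc (2 * (a div 2))} = {a, partner a}"
proof (cases "even a")
  case True
  hence "2 * (a div 2) = a" by simp
  thus ?thesis using True by (simp add: partner_def)
next
  case False
  hence "2 * (a div 2) = a - 1" "Suc (2 * (a div 2)) = a" by presburger+
  thus ?thesis using False by (auto simp: partner_def)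
qed

definition split_block :: "nat \<Rightarrow> nat \<Rightarrow> nat \<Rightarrow> nat \<Rightarrow> nat list set" where
  "split_block s0 s1 s2 s3 = {[s0,s2,s3,s0], [s1,s2,s3,s1], [s2,s0,s1,s2], [s3,s0,s1,s3],
     [s0,s3,s2,s1], [s1,s3,s0,s2], [s2,s1,s0,s3], [s3,s1,s2,s0]}"

definition plain_block :: "nat \<Rightarrow> nat \<Rightarrow> nat \<Rightarrow> nat \<Rightarrow> nat list set" where
  "plain_block s0 s1 s2 s3 = {[s0,s1,s2,s3], [s0,s3,s2,s1], [s1,s3,s0,s2], [s2,s1,s0,s3],
     [s3,s1,s2,s0], [s2,s3,s0,s1]}"

definition block_words :: "nat \<Rightarrow> nat \<Rightarrow> nat \<Rightarrow> nat \<Rightarrow> nat list set" where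
  "block_words s0 s1 s2 s3 =
     (if even s0 \<and> s1 = Suc s0 then split_block s0 s1 s2 s3 else plain_block s0 s1 s2 s3)"

lemma block_words_disjoint:
  assumes "s0 < s1" "s1 < s2" "s2 < s3" "x1 \<in> block_words s0 s1 s2 s3" "x2 \<in> block_words s0 s1 s2 s3"
    "y \<in> del1 x1" "y \<in> del1 x2"
  shows "x1 = x2"
proof -
  have "s0 \<noteq> s1" "s0 \<noteq> s2" "s0 \<noteq> s3" "s1 \<noteq> s2" "s1 \<noteq> s3" "s2 \<noteq> s3" using assms(1-3) by auto
  note ne = this this[symmetric]
  show ?thesis
  proof (cases "even s0 \<and> s1 = Suc s0")
    case True
    show ?thesis using assms(4-7) unfolding block_words_def if_P[OF True] split_block_def
      by (simp only: insert_iff empty_iff) (elim disjE; auto simp: del1_length4 ne)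
  next
    case False
    show ?thesis using assms(4-7) unfolding block_words_def if_not_P[OF False] plain_block_def
      by (simp only: insert_iff empty_iff) (elim disjE; auto simp: del1_length4 ne)
  qed
qed

lemma block_words_cover:
  assumes "s0 < s1" "s1 < s2" "s2 < s3" "{a,b,c} \<subseteq> {s0,s1,s2,s3}" "a \<noteq> b" "b \<noteq> c" "a \<noteq> c"
  shows "\<exists>x\<in>block_words s0 s1 s2 s3. [a,b,c] \<in> del1 x"
proof -
  have "s0 \<noteq> s1" "s0 \<noteq> s2" "s0 \<noteq> s3" "s1 \<noteq> s2" "s1 \<noteq> s3" "s2 \<noteq> s3" using assms(1-3) by auto
  note ne = this this[symmetric]
  have abc: "a \<in> {s0,s1,s2,s3}" "b \<in> {s0,s1,s2,s3}" "c \<in> {s0,s1,s2,s3}" using assms(4) by auto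
  show ?thesis
  proof (cases "even s0 \<and> s1 = Suc s0")
    case True
    show ?thesis using abc assms(5-7) unfolding block_words_def if_P[OF True] split_block_def
      by (simp only: insert_iff empty_iff) (elim disjE; simp add: del1_length4 ne)
  next
    case False
    show ?thesis using abc assms(5-7) unfolding block_words_def if_not_P[OF False] plain_block_def
      by (simp only: insert_iff empty_iff) (elim disjE; simp add: del1_length4 ne)
  qed
qed

definition straddles :: "nat \<Rightarrow> nat \<Rightarrow> nat \<Rightarrow> nat \<Rightarrow> nat \<Rightarrow> nat \<Rightarrow> bool" where
  "straddles s0 s1 s2 s3 a b \<longleftrightarrow>
     (a \<in> {s0,s1} \<and> b \<in> {s2,s3}) \<or> (a \<in> {s2,s3} \<and> b \<in> {s0,s1})"

lemma block_words_palindrome: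
  assumes "s0 < s1" "s1 < s2" "s2 < s3" "x \<in> block_words s0 s1 s2 s3" "[a,b,a] \<in> del1 x"
  shows "even s0 \<and> s1 = Suc s0 \<and> straddles s0 s1 s2 s3 a b"
proof -
  have "s0 \<noteq> s1" "s0 \<noteq> s2" "s0 \<noteq> s3" "s1 \<noteq> s2" "s1 \<noteq> s3" "s2 \<noteq> s3" using assms(1-3) by auto
  note ne = this this[symmetric]
  show ?thesis
  proof (cases "even s0 \<and> s1 = Suc s0")
    case True
    have "straddles s0 s1 s2 s3 a b"
      using assms(4,5) unfolding block_words_def if_P[OF True] split_block_def straddles_def
      by (simp only: insert_iff empty_iff) (elim disjE; auto simp: del1_length4 ne)
    thus ?thesis using True by blast
  next
    case False
    have False using assms(4,5) unfolding block_words_def if_not_P[OF False] plain_block_def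
      by (simp only: insert_iff empty_iff) (elim disjE; auto simp: del1_length4 ne)
    thus ?thesis ..
  qed
qed

lemma split_block_palindrome:
  assumes "s0 < s1" "s1 < s2" "s2 < s3" "even s0" "s1 = Suc s0" "straddles s0 s1 s2 s3 a b"
  shows "\<exists>x\<in>block_words s0 s1 s2 s3. [a,b,a] \<in> del1 x"
proof -
  have "s0 \<noteq> s1" "s0 \<noteq> s2" "s0 \<noteq> s3" "s1 \<noteq> s2" "s1 \<noteq> s3" "s2 \<noteq> s3" using assms(1-3) by auto
  note ne = this this[symmetric]
  show ?thesis using assms(6) unfolding block_words_def if_P[OF conjI[OF assms(4,5)]]
      split_block_def straddles_def
    by (simp only: insert_iff empty_iff) (elim disjE conjE; simp add: del1_length4 ne)
qed

definition quad_words :: "nat set \<Rightarrow> nat list set" where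
  "quad_words Q = (let s = sorted_list_of_set Q in block_words (s!0) (s!1) (s!2) (s!3))"

lemma quad_wordsE:
  assumes "SQS q S" "Q \<in> S"
  obtains s0 s1 s2 s3 where "s0 < s1" "s1 < s2" "s2 < s3" "Q = {s0,s1,s2,s3}"
    "quad_words Q = block_words s0 s1 s2 s3"
proof -
  have "finite Q" "card Q = 4" using SQS_quadruple[OF assms] by auto
  then obtain s0 s1 s2 s3 where "sorted_list_of_set Q = [s0,s1,s2,s3]"
    "s0 < s1" "s1 < s2" "s2 < s3" "Q = {s0,s1,s2,s3}" by (rule quadruple_sorted)
  thus ?thesis using that unfolding quad_words_def by simp
qed

text \<open>Words of length 4 whose deletions never have two equal adjacent letters; their
  deletion weight is at most 1.\<close>
definition adj_free :: "nat list \<Rightarrow> bool" where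
  "adj_free x \<longleftrightarrow> length x = 4 \<and> x!0 \<noteq> x!1 \<and> x!1 \<noteq> x!2 \<and> x!2 \<noteq> x!3 \<and> x!0 \<noteq> x!2 \<and> x!1 \<noteq> x!3"

lemma adj_free_del1: "adj_free x \<Longrightarrow> y \<in> del1 x \<Longrightarrow> y!0 \<noteq> y!1 \<and> y!1 \<noteq> y!2"
  unfolding adj_free_def by (subst (asm) list_length4[of x]) (auto simp: del1_length4)

lemma adj_free_weight: "adj_free x \<Longrightarrow> del_weight x \<le> 1"
proof -
  assume a: "adj_free x"
  have "x = [x!0,x!1,x!2,x!3]" using a list_length4 adj_free_def by blast
  hence "del1 x = set [[x!1,x!2,x!3],[x!0,x!2,x!3],[x!0,x!1,x!3],[x!0,x!1,x!2]]"
    by (metis del1_length4 list.simps(15) empty_set)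
  hence card: "card (del1 x) \<le> 4"
    using card_length[of "[[x!1,x!2,x!3],[x!0,x!2,x!3],[x!0,x!1,x!3],[x!0,x!1,x!2]]"] by simp
  have "\<And>y. y \<in> del1 x \<Longrightarrow> wt y = 1/4" using adj_free_del1[OF a] by (simp add: wt_def)
  hence "del_weight x \<le> real (card (del1 x)) * (1/4)"
    unfolding del_weight_def by (intro sum_bounded_above) simp
  thus ?thesis using card by simp
qed

lemma block_words_adj_free:
  assumes "s0 < s1" "s1 < s2" "s2 < s3" "x \<in> block_words s0 s1 s2 s3"
  shows "adj_free x \<and> set x \<subseteq> {s0,s1,s2,s3}"
  using assms unfolding block_words_def split_block_def plain_block_def adj_free_def
  by (auto split: if_splits)

lemma quad_words_adj_free:
  assumes "SQS q S" "Q \<in> S" "x \<in> quad_words Q"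
  shows "adj_free x \<and> set x \<subseteq> Q"
proof -
  obtain s0 s1 s2 s3 where "s0 < s1" "s1 < s2" "s2 < s3" "Q = {s0,s1,s2,s3}"
    "quad_words Q = block_words s0 s1 s2 s3" using quad_wordsE[OF assms(1,2)] .
  thus ?thesis using assms(3) block_words_adj_free by blast
qed

text \<open>For letters a, b in different pairs, the triple formed by the pair of the one in the
  lower pair together with the other letter.  A block covering the palindrome [a,b,a]
  belongs to the quadruple containing this triple.\<close>
definition pal_triple :: "nat \<Rightarrow> nat \<Rightarrow> nat set" where
  "pal_triple a b = (if a div 2 < b div 2 then {a, partner a, b} else {b, partner b, a})"

lemma card_pal_triple: "a div 2 \<noteq> b div 2 \<Longrightarrow> card (pal_triple a b) = 3"
  unfolding pal_triple_def using partner_div partner_neq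
  by (auto simp: card_insert_if) (metis partner_div)+

lemma pal_triple_subset:
  assumes "s0 < s1" "s1 < s2" "s2 < s3" "even s0" "s1 = Suc s0" "straddles s0 s1 s2 s3 a b"
  shows "pal_triple a b \<subseteq> {s0,s1,s2,s3} \<and> a div 2 \<noteq> b div 2"
proof -
  have d: "s0 div 2 = s1 div 2" "s0 div 2 < s2 div 2" "s0 div 2 < s3 div 2"
    using assms(1-5) by presburger+
  have p: "partner s0 = s1" "partner s1 = s0" using assms(4,5) unfolding partner_def by auto
  show ?thesis using assms(6) d p unfolding pal_triple_def straddles_def by auto
qed

text \<open>Two blocks covering the same word come from the same quadruple: for a word of
  three distinct letters by the Steiner property directly, for a palindrome via
  its triple.\<close>
lemma quad_words_disjoint:
  assumes sqs: "SQS q S" and Q: "Q1 \<in> S" "Q2 \<in> S" and x: "x1 \<in> quad_words Q1" "x2 \<in> quad_words Q2"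
    and y: "y \<in> del1 x1" "y \<in> del1 x2"
  shows "x1 = x2"
proof -
  obtain s0 s1 s2 s3 where s: "s0 < s1" "s1 < s2" "s2 < s3" "Q1 = {s0,s1,s2,s3}"
    "quad_words Q1 = block_words s0 s1 s2 s3" using quad_wordsE[OF sqs Q(1)] .
  obtain t0 t1 t2 t3 where t: "t0 < t1" "t1 < t2" "t2 < t3" "Q2 = {t0,t1,t2,t3}"
    "quad_words Q2 = block_words t0 t1 t2 t3" using quad_wordsE[OF sqs Q(2)] .
  have g1: "adj_free x1 \<and> set x1 \<subseteq> Q1" using quad_words_adj_free[OF sqs Q(1) x(1)] .
  have g2: "adj_free x2 \<and> set x2 \<subseteq> Q2" using quad_words_adj_free[OF sqs Q(2) x(2)] .
  have "length y = 3" using del1_length[OF y(1)] g1 by (simp add: adj_free_def)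
  hence ye: "y = [y!0,y!1,y!2]" by (rule list_length3)
  have ne: "y!0 \<noteq> y!1" "y!1 \<noteq> y!2" using adj_free_del1[OF _ y(1)] g1 by auto
  have sy1: "set y \<subseteq> Q1" using del1_set[OF y(1)] g1 by blast
  have sy2: "set y \<subseteq> Q2" using del1_set[OF y(2)] g2 by blast
  have "Q1 = Q2"
  proof (cases "y!0 = y!2")
    case False
    have "card (set y) = 3" using ne False by (subst ye) simp
    thus ?thesis using SQS_unique[OF sqs Q sy1 sy2] by blast
  next
    case True
    hence y1: "[y!0,y!1,y!0] \<in> del1 x1" and y2: "[y!0,y!1,y!0] \<in> del1 x2"
      using y ye by metis+
    have k1: "pal_triple (y!0) (y!1) \<subseteq> Q1 \<and> y!0 div 2 \<noteq> y!1 div 2"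
      using pal_triple_subset[OF s(1-3)] block_words_palindrome[OF s(1-3) _ y1] x(1) s(4,5) by blast
    have k2: "pal_triple (y!0) (y!1) \<subseteq> Q2"
      using pal_triple_subset[OF t(1-3)] block_words_palindrome[OF t(1-3) _ y2] x(2) t(4,5) by blast
    show ?thesis using SQS_unique[OF sqs Q _ k2] k1 card_pal_triple by blast
  qed
  thus ?thesis using block_words_disjoint[OF s(1-3)] x s(5) t(5) y by metis
qed

text \<open>The words aaaa and aabb (a \<noteq> b); they cover every word with two equal adjacent letters.\<close>
definition pair_words :: "nat \<Rightarrow> nat list set" where
  "pair_words q = {[a,a,a,a] | a. a < q} \<union> {[a,a,b,b] | a b. a < q \<and> b < q \<and> a \<noteq> b}"

definition code :: "nat \<Rightarrow> nat set set \<Rightarrow> nat list set" where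
  "code q S = pair_words q \<union> (\<Union>Q\<in>S. quad_words Q)"

lemma pair_words_del1: "x \<in> pair_words q \<Longrightarrow> y \<in> del1 x \<Longrightarrow> y!0 = y!1 \<or> y!1 = y!2"
  unfolding pair_words_def by (auto simp: del1_length4)

text \<open>The code corrects single deletions: words aaaa and aabb only cover words with equal
  adjacent letters, block words only words without, and blocks are mutually disjoint.\<close>
lemma code_sdc:
  assumes sqs: "SQS q S"
  shows "sdc_code 4 q (code q S)"
  unfolding sdc_code_def
proof (intro conjI ballI impI)
  have "quad_words Q \<subseteq> words 4 q" if "Q \<in> S" for Q
    using quad_words_adj_free[OF sqs that] SQS_quadruple[OF sqs that]
    unfolding words_def adj_free_def by blast
  moreover have "pair_words q \<subseteq> words 4 q" unfolding pair_words_def words_def by auto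
  ultimately show "code q S \<subseteq> words 4 q" unfolding code_def by blast
next
  fix x1 x2 assume x: "x1 \<in> code q S" "x2 \<in> code q S" "x1 \<noteq> x2"
  show "del1 x1 \<inter> del1 x2 = {}"
  proof (rule ccontr)
    assume "del1 x1 \<inter> del1 x2 \<noteq> {}"
    then obtain y where y: "y \<in> del1 x1" "y \<in> del1 x2" by blast
    have quad: "\<not> (y!0 = y!1 \<or> y!1 = y!2)" if "x \<in> quad_words Q" "Q \<in> S" "y \<in> del1 x" for x Q
      using adj_free_del1 quad_words_adj_free[OF sqs that(2,1)] that(3) by blast
    have pair: "x1 = x2" if "x1 \<in> pair_words q" "x2 \<in> pair_words q"
      using that y unfolding pair_words_def by (auto simp: del1_length4)
    show False
      using x y pair pair_words_del1[of x1 q y] pair_words_del1[of x2 q y] quad[of x1] quad[of x2]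
        quad_words_disjoint[OF sqs, of _ _ x1 x2 y] unfolding code_def by blast
  qed
qed

lemma code_del_weight:
  assumes "SQS q S" "x \<in> code q S"
  shows "del_weight x \<le> 1"
proof -
  have "del_weight x \<le> 1" if "x \<in> pair_words q"
    using that unfolding pair_words_def by (auto simp: del_weight4 wt_def)
  moreover have "del_weight x \<le> 1" if "x \<in> quad_words Q" "Q \<in> S" for Q
    using adj_free_weight quad_words_adj_free[OF assms(1) that(2,1)] by blast
  ultimately show ?thesis using assms(2) unfolding code_def by blast
qed

section \<open>Coverage under the step property\<close>

lemma step_pair_lowest:
  assumes st: "step_property q S id" and sqs: "SQS q S" and QS: "Q \<in> S"
    and Qe: "Q = {s0,s1,s2,s3}" and o: "s0 < s1" "s1 < s2" "s2 < s3"
    and m: "2*t \<in> Q" "Suc (2*t) \<in> Q" "h \<in> Q" "h > Suc (2*t)"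
  shows "s0 = 2*t \<and> s1 = Suc (2*t)"
proof -
  have Qq: "Q \<subseteq> {..<q}" using SQS_quadruple[OF sqs QS] by blast
  have tq: "t < q div 2" using m(2) Qq by auto
  have lt: "s0 < q" "s3 < q" using Qq Qe by auto
  have not_middle: "\<not> (2*t = s1 \<and> Suc (2*t) = s2)"
  proof
    assume mid: "2*t = s1 \<and> Suc (2*t) = s2"
    hence "Q = {id (2*t), id (2*t+1), id s0, id s3}" using Qe by auto
    hence "(s0 < 2*t \<and> s3 < 2*t) \<or> (s0 > 2*t+1 \<and> s3 > 2*t+1)"
      using st tq QS lt unfolding step_property_def by blast
    thus False using mid o by linarith
  qed
  have "2*t \<in> {s0,s1,s2,s3}" "Suc (2*t) \<in> {s0,s1,s2,s3}" "h \<in> {s0,s1,s2,s3}" using m Qe by auto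
  thus ?thesis using o m(4) not_middle by (auto; linarith)
qed

text \<open>The palindromes [a, partner a, a], the only words of length 3 the code misses.\<close>
definition missed_pals :: "nat \<Rightarrow> nat list set" where
  "missed_pals q = (\<lambda>a. [a, partner a, a]) ` {..<q}"

lemma missed_pals_weight: "(\<Sum>y\<in>missed_pals q. wt y) = real q / 4"
proof -
  have inj: "inj_on (\<lambda>a. [a, partner a, a]) {..<q}" by (auto simp: inj_on_def)
  have "(\<Sum>y\<in>missed_pals q. wt y) = (\<Sum>a<q. wt [a, partner a, a])"
    unfolding missed_pals_def by (subst sum.reindex[OF inj]) simp
  also have "\<dots> = (\<Sum>a<q. (1/4::real))"
    using partner_neq by (intro sum.cong) (auto simp: wt_def, metis partner_neq)
  finally show ?thesis by simp
qed

lemma missed_pals_words: "even q \<Longrightarrow> missed_pals q \<subseteq> words 3 q"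
  unfolding missed_pals_def words_def using partner_less by auto

text \<open>A palindrome [a,b,a] with a, b in different pairs is covered by the block of the
  quadruple through its triple, which is a split block by the step property.\<close>
lemma palindrome_covered:
  assumes ev: "even q" and sqs: "SQS q S" and st: "step_property q S id"
    and ab: "a < q" "b < q" "a div 2 \<noteq> b div 2"
  shows "\<exists>Q\<in>S. \<exists>x\<in>quad_words Q. [a,b,a] \<in> del1 x"
proof -
  define lo hi where "lo = (if a div 2 < b div 2 then a else b)"
    and "hi = (if a div 2 < b div 2 then b else a)"
  have K: "pal_triple a b = {lo, partner lo, hi}" unfolding pal_triple_def lo_def hi_def by auto
  have lohi: "lo div 2 < hi div 2" using ab(3) unfolding lo_def hi_def by auto
  have lq: "lo < q" "hi < q" using ab lo_def hi_def by auto
  have Kq: "pal_triple a b \<subseteq> {..<q}" using K lq partner_less[OF ev lq(1)] by auto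
  obtain Q where Q: "Q \<in> S" "pal_triple a b \<subseteq> Q"
    using SQS_cover[OF sqs Kq card_pal_triple[OF ab(3)]] by blast
  obtain s0 s1 s2 s3 where s: "s0 < s1" "s1 < s2" "s2 < s3" "Q = {s0,s1,s2,s3}"
    "quad_words Q = block_words s0 s1 s2 s3" using quad_wordsE[OF sqs Q(1)] .
  define t where "t = lo div 2"
  have pe: "{2*t, Suc (2*t)} = {lo, partner lo}" using pair_of t_def by simp
  have inQ: "2*t \<in> Q" "Suc (2*t) \<in> Q" "hi \<in> Q" using pe Q(2) K by auto
  have hig: "hi > Suc (2*t)" using lohi t_def by linarith
  have ss: "s0 = 2*t \<and> s1 = Suc (2*t)" by (rule step_pair_lowest[OF st sqs Q(1) s(4) s(1-3) inQ hig])
  have "lo \<in> {s0,s1}" "hi \<in> {s2,s3}" using pe ss inQ(3) s(4) hig by auto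
  hence "straddles s0 s1 s2 s3 a b" unfolding straddles_def lo_def hi_def by (auto split: if_splits)
  hence "\<exists>x\<in>block_words s0 s1 s2 s3. [a,b,a] \<in> del1 x"
    by (rule split_block_palindrome[OF s(1-3), rotated 2]) (use ss in auto)
  thus ?thesis using Q(1) s(5) by blast
qed

text \<open>Every word of length 3 except the missed palindromes is covered: words with equal
  adjacent letters by aaaa or aabb, others by the block of a quadruple.\<close>
lemma code_cover:
  assumes ev: "even q" and sqs: "SQS q S" and st: "step_property q S id"
  shows "words 3 q - missed_pals q \<subseteq> \<Union>(del1 ` code q S)"
proof
  fix y assume y: "y \<in> words 3 q - missed_pals q"
  have l: "length y = 3" and sy: "set y \<subseteq> {..<q}" using y by (auto simp: words_def)
  define a b c where "a = y!0" "b = y!1" "c = y!2"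
  have ye: "y = [a,b,c]" using list_length3[OF l] a_b_c_def by simp
  have abc: "a < q" "b < q" "c < q" using sy ye by auto
  have "\<exists>x\<in>code q S. [a,b,c] \<in> del1 x"
  proof (cases "a = b \<or> b = c")
    case True
    hence "[a,a,c,c] \<in> code q S \<and> [a,b,c] \<in> del1 [a,a,c,c]
        \<or> [a,a,a,a] \<in> code q S \<and> [a,b,c] \<in> del1 [a,a,a,a]"
      using abc by (auto simp: code_def pair_words_def del1_length4)
    thus ?thesis by blast
  next
    case False
    hence ne: "a \<noteq> b" "b \<noteq> c" by auto
    show ?thesis
    proof (cases "a = c")
      case False
      obtain Q where Q: "Q \<in> S" "{a,b,c} \<subseteq> Q"
        using SQS_cover[OF sqs, of "{a,b,c}"] abc ne False by auto
      obtain s0 s1 s2 s3 where s: "s0 < s1" "s1 < s2" "s2 < s3" "Q = {s0,s1,s2,s3}"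
        "quad_words Q = block_words s0 s1 s2 s3" using quad_wordsE[OF sqs Q(1)] .
      have "\<exists>x\<in>block_words s0 s1 s2 s3. [a,b,c] \<in> del1 x"
        by (rule block_words_cover[OF s(1-3)]) (use Q(2) s(4) ne False in auto)
      thus ?thesis using Q(1) s(5) unfolding code_def by blast
    next
      case True
      have "b \<noteq> partner a" using y ye True abc unfolding missed_pals_def by blast
      hence "a div 2 \<noteq> b div 2" using same_pair[of a b] ne by auto
      thus ?thesis using palindrome_covered[OF ev sqs st abc(1,2)] True unfolding code_def by blast
    qed
  qed
  thus "y \<in> \<Union>(del1 ` code q S)" using ye by blast
qed

text \<open>The code covers all but weight q/4 of B_q^3 with deletion weights at most 1.\<close>
theorem code_lower_bound:
  assumes ev: "even q" and sqs: "SQS q S" and st: "step_property q S id"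
  shows "real q^3/4 + real q^2/2 \<le> real (card (code q S))"
proof -
  define C where "C = code q S"
  have sdc: "sdc_code 4 q C" using code_sdc[OF sqs] C_def by simp
  have Cov3: "\<Union>(del1 ` C) \<subseteq> words 3 q"
    using sdc del1_words unfolding sdc_code_def by fastforce
  have "real q^3/4 + real q^2/2 = (\<Sum>y\<in>words 3 q. wt y) - (\<Sum>y\<in>missed_pals q. wt y)"
    using total_weight[of q] missed_pals_weight[of q] by simp
  also have "\<dots> = (\<Sum>y\<in>words 3 q - missed_pals q. wt y)"
    using missed_pals_words[OF ev] finite_words by (simp add: sum_diff)
  also have "\<dots> \<le> (\<Sum>y\<in>\<Union>(del1 ` C). wt y)"
  proof (rule sum_mono2)
    show "finite (\<Union>(del1 ` C))" using Cov3 finite_words finite_subset by blast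
  qed (use code_cover[OF ev sqs st] in \<open>auto simp: C_def wt_nonneg\<close>)
  also have "\<dots> = (\<Sum>x\<in>C. del_weight x)" using code_weight[OF sdc] by simp
  also have "\<dots> \<le> (\<Sum>x\<in>C. 1)" by (rule sum_mono) (use code_del_weight[OF sqs] C_def in auto)
  finally show ?thesis using C_def by simp
qed

theorem theorem3p1:
  fixes q :: nat
  assumes "q \<ge> 4" and "even q"
    and "\<exists>S L. SQS q S \<and> bij_betw L {..<q} {..<q} \<and> step_property q S L"
  shows "real (N1 4 q) = real (q^2 * (q+2)) / 4"
proof -
  obtain S L where S: "SQS q S" "bij_betw L {..<q} {..<q}" "step_property q S L"
    using assms(3) by blast
  define S' where "S' = (\<lambda>Q. the_inv_into {..<q} L ` Q) ` S"
  have S': "SQS q S'" "step_property q S' id"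
    using SQS_relabel[OF S(1,2)] S(3) unfolding S'_def by auto
  define C where "C = code q S'"
  have sdc: "sdc_code 4 q C" unfolding C_def by (rule code_sdc[OF S'(1)])
  have optimal: "real (card C) = real q^3/4 + real q^2/2"
    using sdc_upper_bound[OF sdc assms(2)] code_lower_bound[OF assms(2) S'] unfolding C_def
    by linarith
  have "N1 4 q = card C"
  proof (rule N1_eqI[OF sdc])
    show "card C' \<le> card C" if "sdc_code 4 q C'" for C'
      using sdc_upper_bound[OF that assms(2)] optimal by linarith
  qed
  thus ?thesis using optimal by (simp add: power2_eq_square power3_eq_cube algebra_simps)
qed

end
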